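(* Let $F$ be a field, $n$ a positive integer, and let $S\subseteq M_n(F)$ be a Clifford semigroup (under matrix multiplication) in which every matrix has rank $1$. Then $S$ is a commutative group, and for every matrix in $S$ all of its eigenvalues (in an algebraic closure of $F$) lie in $F$.
   Context: $M_n(F)$ denotes the set of $n\times n$ matrices over $F$. A Clifford semigroup is a completely regular inverse semigroup (equivalently, a regular semigroup whose idempotents are central). *)

theory Defs
  imports "Jordan_Normal_Form.DL_Rank" "Jordan_Normal_Form.Char_Poly"
begin

definition mat_semigroup :: "nat \<Rightarrow> 'a::field mat set \<Rightarrow> bool" where
  "mat_semigroup n S \<longleftrightarrow> S \<noteq> {} \<and> S \<subseteq> carrier_mat n n \<and> (\<forall>A\<in>S. \<forall>B\<in>S. A * B \<in> S)"

text \<open>Clifford semigroup: regular semigroup whose idempotents are central.\<close>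
definition clifford_mat_semigroup :: "nat \<Rightarrow> 'a::field mat set \<Rightarrow> bool" where
  "clifford_mat_semigroup n S \<longleftrightarrow> mat_semigroup n S
     \<and> (\<forall>A\<in>S. \<exists>X\<in>S. A * X * A = A)
     \<and> (\<forall>E\<in>S. E * E = E \<longrightarrow> (\<forall>A\<in>S. E * A = A * E))"

definition mat_group :: "'a::field mat set \<Rightarrow> bool" where
  "mat_group S \<longleftrightarrow> (\<forall>A\<in>S. \<forall>B\<in>S. A * B \<in> S)
     \<and> (\<exists>E\<in>S. (\<forall>A\<in>S. E * A = A \<and> A * E = A) \<and> (\<forall>A\<in>S. \<exists>B\<in>S. A * B = E \<and> B * A = E))"

text \<open>All eigenvalues (in an algebraic closure) lie in F: the characteristic
  polynomial splits into linear factors over F.\<close>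
definition eigenvalues_in_field :: "'a::field mat \<Rightarrow> bool" where
  "eigenvalues_in_field A \<longleftrightarrow> (\<exists>as. char_poly A = (\<Prod>a\<leftarrow>as. [:- a, 1:]))"

end

theory Submission
  imports Defs "Jordan_Normal_Form.Schur_Decomposition"
begin

text \<open>A rank-one matrix is an outer product \<open>u v\<^sup>T\<close>, so \<open>E M E\<close> is a scalar multiple
  of \<open>E\<close> whenever \<open>E\<close> has rank one. For commuting idempotents \<open>E, F\<close> of \<open>S\<close> this gives
  \<open>EF = c E\<close> with \<open>EF\<close> again a nonzero idempotent, forcing \<open>c = 1\<close> and, symmetrically,
  \<open>E = EF = F\<close>. A regular semigroup with a unique idempotent is a group, and each of its
  elements \<open>A = E A E\<close> is a scalar multiple of the identity \<open>E\<close>, so the group is commutative.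
  Finally \<open>u v\<^sup>T\<close> is similar, by an invertible matrix sending \<open>u\<close> to the first unit vector,
  to a matrix whose only nonzero row is the first one; being upper triangular, it has a
  characteristic polynomial that splits over the field.\<close>

definition outer_mat :: "nat \<Rightarrow> 'a::field vec \<Rightarrow> 'a vec \<Rightarrow> 'a mat" where
  "outer_mat n u v = mat n n (\<lambda>(i, j). u $ i * v $ j)"

lemma outer_mat_carrier [simp]: "outer_mat n u v \<in> carrier_mat n n"
  and dim_outer_mat [simp]: "dim_row (outer_mat n u v) = n" "dim_col (outer_mat n u v) = n"
  and index_outer_mat [simp]: "i < n \<Longrightarrow> j < n \<Longrightarrow> outer_mat n u v $$ (i, j) = u $ i * v $ j"
  by (auto simp: outer_mat_def)

lemma outer_mat_mult_vec:
  assumes "u \<in> carrier_vec n" "v \<in> carrier_vec n" "w \<in> carrier_vec n"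
  shows "outer_mat n u v *\<^sub>v w = (v \<bullet> w) \<cdot>\<^sub>v u"
  by (rule eq_vecI, insert assms, auto simp: scalar_prod_def sum_distrib_left ac_simps)

lemma mult_outer_mat:
  assumes M: "M \<in> carrier_mat n n" and u: "u \<in> carrier_vec n"
  shows "M * outer_mat n u v = outer_mat n (M *\<^sub>v u) v"
  by (rule eq_matI, insert M u, auto simp: scalar_prod_def sum_distrib_left ac_simps)

lemma outer_mat_mult:
  assumes M: "M \<in> carrier_mat n n" and v: "v \<in> carrier_vec n"
  shows "outer_mat n u v * M = outer_mat n u (transpose_mat M *\<^sub>v v)"
  by (rule eq_matI, insert M v, auto simp: scalar_prod_def sum_distrib_left ac_simps)

lemma outer_mat_mult_outer_mat:
  assumes "u \<in> carrier_vec n" "v \<in> carrier_vec n" "p \<in> carrier_vec n"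
  shows "outer_mat n u v * outer_mat n p q = (v \<bullet> p) \<cdot>\<^sub>m outer_mat n u q"
  using assms by (simp add: mult_outer_mat outer_mat_mult_vec) (rule eq_matI, auto)

lemma rank_one_mat_eq_outer_mat:
  fixes A :: "'a::field mat"
  assumes A: "A \<in> carrier_mat n n" and rank: "vec_space.rank n A = 1"
  obtains u v where "u \<in> carrier_vec n" "v \<in> carrier_vec n" "A = outer_mat n u v"
proof -
  interpret vec_space "TYPE('a)" n .
  let ?indpt_cols = "\<lambda>T. T \<subseteq> set (cols A) \<and> lin_indpt T"
  have cols: "set (cols A) \<subseteq> carrier_vec n"
    using A cols_dim by blast
  obtain U where max: "maximal U ?indpt_cols"
    using maximal_exists_superset[of "set (cols A)" ?indpt_cols "{}"]
    by (auto simp: lin_dep_def)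
  then obtain u where U: "U = {u}"
    using rank_card_indpt[OF A max] rank by (auto intro: card_1_singletonE)
  have u_col: "u \<in> set (cols A)" and u_indpt: "lin_indpt {u}"
    using max U by (auto simp: maximal_def)
  then have u: "u \<in> carrier_vec n" using cols by auto
  have in_span: "c \<in> span {u}" if c: "c \<in> set (cols A)" for c
  proof (cases "c = u")
    case True
    then show ?thesis using u by (simp add: span_mem)
  next
    case False
    have "lin_dep {u, c}"
    proof (rule ccontr)
      assume "\<not> lin_dep {u, c}"
      then have "{u, c} = {u}"
        using max c u_col unfolding maximal_def U by (auto dest!: spec[of _ "{u, c}"])
      then show False using U False by auto
    qed
    then show ?thesis
      using lin_dep_iff_in_span[of "{u}" c] u_indpt u c cols False by (auto simp: insert_commute)
  qed
  have "\<exists>a. col A j = a \<cdot>\<^sub>v u" if j: "j < n" for j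
  proof -
    have "col A j \<in> set (cols A)"
      using j A by (metis cols_length cols_nth carrier_matD(2) nth_mem)
    then obtain a where "col A j = lincomb a {u}"
      using in_span finite_in_span[of "{u}" "col A j"] u by (metis empty_subsetI finite.simps insert_subset)
    then show ?thesis using u by (auto simp: lincomb_def)
  qed
  then obtain a where a: "\<And>j. j < n \<Longrightarrow> col A j = a j \<cdot>\<^sub>v u" by metis
  have "A = outer_mat n u (vec n a)"
  proof (rule eq_matI)
    fix i j assume "i < dim_row (outer_mat n u (vec n a))" "j < dim_col (outer_mat n u (vec n a))"
    then have i: "i < n" and j: "j < n" by auto
    have "A $$ (i, j) = col A j $ i" using A i j by simp
    then show "A $$ (i, j) = outer_mat n u (vec n a) $$ (i, j)"
      using a[OF j] u i j by (simp add: mult.commute)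
  qed (use A in auto)
  then show thesis by (rule that[OF u vec_carrier])
qed

lemma similar_upper_triangular_eigenvalues_in_field:
  assumes "similar_mat A B" "B \<in> carrier_mat n n" "upper_triangular B"
  shows "eigenvalues_in_field A"
  using char_poly_similar[OF assms(1)] char_poly_upper_triangular[OF assms(2,3)]
  unfolding eigenvalues_in_field_def by metis

lemma invertible_mat_to_unit_vec:
  fixes u :: "'a::field vec"
  assumes u: "u \<in> carrier_vec n" and u0: "u \<noteq> 0\<^sub>v n"
  obtains P Q where "P \<in> carrier_mat n n" "Q \<in> carrier_mat n n"
    "P * Q = 1\<^sub>m n" "Q * P = 1\<^sub>m n" "P *\<^sub>v u = unit_vec n 0"
proof -
  interpret vec_space "TYPE('a)" n .
  define bs where "bs = basis_completion u"
  note bs = basis_completion[OF u u0, folded bs_def]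
  define Q where "Q = mat_of_cols n bs"
  have Q: "Q \<in> carrier_mat n n" and cols_Q: "cols Q = bs"
    using bs by (auto simp: Q_def)
  have "rank Q = n"
    using lin_indpt_full_rank[OF Q] bs cols_Q by simp
  then have "det Q \<noteq> 0" using det_rank_iff[OF Q] by simp
  then obtain P where P: "P \<in> carrier_mat n n" and "P * Q = 1\<^sub>m n" "Q * P = 1\<^sub>m n"
    using det_non_zero_imp_unit[OF Q, of undefined] by (auto simp: Units_def ring_mat_def)
  moreover have "n > 0" using u u0 by (cases n) auto
  then have "Q *\<^sub>v unit_vec n 0 = u"
    using bs u by (cases bs) (auto intro!: eq_vecI simp: Q_def mat_of_cols_index)
  then have "P *\<^sub>v u = unit_vec n 0"
    using P Q \<open>P * Q = 1\<^sub>m n\<close> by (metis assoc_mult_mat_vec one_mult_mat_vec unit_vec_carrier)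
  ultimately show thesis using that Q by blast
qed

lemma eigenvalues_in_field_outer_mat:
  fixes u v :: "'a::field vec"
  assumes u: "u \<in> carrier_vec n" and v: "v \<in> carrier_vec n"
  shows "eigenvalues_in_field (outer_mat n u v)"
proof (cases "u = 0\<^sub>v n")
  case True
  then have "upper_triangular (outer_mat n u v)"
    by (auto simp: upper_triangular_def)
  then show ?thesis
    by (rule similar_upper_triangular_eigenvalues_in_field[OF similar_mat_refl[OF outer_mat_carrier] outer_mat_carrier])
next
  case False
  obtain P Q where P: "P \<in> carrier_mat n n" and Q: "Q \<in> carrier_mat n n"
    and PQ: "P * Q = 1\<^sub>m n" and QP: "Q * P = 1\<^sub>m n" and Pu: "P *\<^sub>v u = unit_vec n 0"
    using invertible_mat_to_unit_vec[OF u False] by blast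
  define A where "A = outer_mat n u v"
  have "P * A * Q = outer_mat n (unit_vec n 0) (transpose_mat Q *\<^sub>v v)"
    unfolding A_def using P Q u v by (simp add: mult_outer_mat Pu outer_mat_mult)
  moreover have "upper_triangular (outer_mat n (unit_vec n 0) (transpose_mat Q *\<^sub>v v))"
    by (auto simp: upper_triangular_def)
  moreover have "similar_mat (P * A * Q) A"
    using P Q PQ QP by (intro similar_matI[of "P * A * Q" A P Q n]) (auto simp: A_def)
  ultimately show ?thesis
    unfolding A_def by (metis similar_mat_sym similar_upper_triangular_eigenvalues_in_field outer_mat_carrier)
qed

lemma rank_one_mat_sandwich:
  fixes A :: "'a::field mat"
  assumes A: "A \<in> carrier_mat n n" and rank: "vec_space.rank n A = 1" and M: "M \<in> carrier_mat n n"
  obtains c where "A * M * A = c \<cdot>\<^sub>m A"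
proof -
  obtain u v where u: "u \<in> carrier_vec n" and v: "v \<in> carrier_vec n" and A_eq: "A = outer_mat n u v"
    using rank_one_mat_eq_outer_mat[OF A rank] .
  have "A * M * A = A * (M * A)"
    by (rule assoc_mult_mat[OF A M A])
  also have "\<dots> = (v \<bullet> (M *\<^sub>v u)) \<cdot>\<^sub>m A"
    using M u v by (simp add: A_eq mult_outer_mat[OF M u] outer_mat_mult_outer_mat)
  finally show thesis by (rule that)
qed

lemma rank_one_mat_nonzero: "vec_space.rank n A = 1 \<Longrightarrow> A \<noteq> 0\<^sub>m n nc"
  using vec_space.rank_0I[of n nc] by (metis zero_neq_one)

lemma smult_mult_smult_idempotent:
  fixes E :: "'a::comm_ring_1 mat"
  assumes E: "E \<in> carrier_mat n n" and idem: "E * E = E"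
  shows "(a \<cdot>\<^sub>m E) * (b \<cdot>\<^sub>m E) = (a * b) \<cdot>\<^sub>m E"
proof -
  have "(a \<cdot>\<^sub>m E) * (b \<cdot>\<^sub>m E) = a \<cdot>\<^sub>m (b \<cdot>\<^sub>m (E * E))"
    using mult_smult_assoc_mat[OF E, of "b \<cdot>\<^sub>m E" n] mult_smult_distrib[OF E E] E by simp
  then show ?thesis
    using idem by (auto intro!: eq_matI)
qed

lemma smult_idempotent_eq_one:
  fixes c :: "'a::field"
  assumes E: "E \<in> carrier_mat n n" and idem: "E * E = E"
    and c_idem: "(c \<cdot>\<^sub>m E) * (c \<cdot>\<^sub>m E) = c \<cdot>\<^sub>m E" and nonzero: "c \<cdot>\<^sub>m E \<noteq> 0\<^sub>m n n"
  shows "c = 1"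
proof -
  have "\<exists>i<n. \<exists>j<n. c * E $$ (i, j) \<noteq> 0"
  proof (rule ccontr)
    assume "\<not> ?thesis"
    then have "c \<cdot>\<^sub>m E = 0\<^sub>m n n" using E by (intro eq_matI) auto
    with nonzero show False ..
  qed
  then obtain i j where ij: "i < n" "j < n" and entry: "c * E $$ (i, j) \<noteq> 0"
    by blast
  have "(c * c) \<cdot>\<^sub>m E = c \<cdot>\<^sub>m E"
    using c_idem smult_mult_smult_idempotent[OF E idem] by simp
  then have "((c * c) \<cdot>\<^sub>m E) $$ (i, j) = (c \<cdot>\<^sub>m E) $$ (i, j)"
    by simp
  then have "c * (c * E $$ (i, j)) = 1 * (c * E $$ (i, j))"
    using ij E by (simp add: mult.assoc)
  then show ?thesis
    using mult_right_cancel[OF entry] by blast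
qed

lemma commuting_rank_one_idempotents_mult:
  fixes E F :: "'a::field mat"
  assumes E: "E \<in> carrier_mat n n" "vec_space.rank n E = 1" "E * E = E"
    and F: "F \<in> carrier_mat n n" "F * F = F"
    and comm: "E * F = F * E" and nonzero: "E * F \<noteq> 0\<^sub>m n n"
  shows "E * F = E"
proof -
  have EF: "E * F \<in> carrier_mat n n" using E F by simp
  obtain c where c: "E * F * E = c \<cdot>\<^sub>m E"
    using rank_one_mat_sandwich[OF E(1,2) F(1)] .
  have E_EF: "E * (E * F) = E * F"
    using assoc_mult_mat[OF E(1) E(1) F(1), symmetric] E(3) by simp
  have "E * F * E = E * (E * F)"
    by (subst assoc_mult_mat[OF E(1) F(1) E(1)]) (simp only: comm)
  then have EF_eq: "E * F = c \<cdot>\<^sub>m E"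
    using c E_EF by simp
  have "E * F * (E * F) = E * (F * (F * E))"
    by (subst assoc_mult_mat[OF E(1) F(1) EF]) (simp only: comm)
  also have "\<dots> = E * (E * F)"
    using assoc_mult_mat[OF F(1) F(1) E(1), symmetric] F(2) comm by simp
  also have "\<dots> = E * F"
    by (rule E_EF)
  finally have "(c \<cdot>\<^sub>m E) * (c \<cdot>\<^sub>m E) = c \<cdot>\<^sub>m E"
    unfolding EF_eq .
  then have "c = 1"
    using smult_idempotent_eq_one[OF E(1,3)] nonzero EF_eq by simp
  then show ?thesis
    using EF_eq E by (auto intro!: eq_matI)
qed

lemma commuting_rank_one_idempotents_eq:
  fixes E F :: "'a::field mat"
  assumes E: "E \<in> carrier_mat n n" "vec_space.rank n E = 1" "E * E = E"
    and F: "F \<in> carrier_mat n n" "vec_space.rank n F = 1" "F * F = F"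
    and comm: "E * F = F * E" and nonzero: "E * F \<noteq> 0\<^sub>m n n"
  shows "E = F"
  using commuting_rank_one_idempotents_mult[OF E F(1,3) comm nonzero]
    commuting_rank_one_idempotents_mult[OF F E(1,3) comm[symmetric]] comm nonzero
  by simp

lemma rank_one_central_idempotents_eq:
  fixes S :: "'a::field mat set"
  assumes semigroup: "mat_semigroup n S"
    and central: "\<forall>E\<in>S. E * E = E \<longrightarrow> (\<forall>A\<in>S. E * A = A * E)"
    and rank: "\<forall>A\<in>S. vec_space.rank n A = 1"
  shows "\<forall>E\<in>S. \<forall>F\<in>S. E * E = E \<longrightarrow> F * F = F \<longrightarrow> E = F"
proof (intro ballI impI)
  have carrier: "S \<subseteq> carrier_mat n n" and mult: "\<forall>A\<in>S. \<forall>B\<in>S. A * B \<in> S"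
    using semigroup by (auto simp: mat_semigroup_def)
  fix E F assume E: "E \<in> S" "E * E = E" and F: "F \<in> S" "F * F = F"
  have "vec_space.rank n (E * F) = 1"
    using rank mult E(1) F(1) by blast
  then have "E * F \<noteq> 0\<^sub>m n n"
    by (rule rank_one_mat_nonzero)
  moreover have "E * F = F * E"
    using central E F(1) by blast
  ultimately show "E = F"
    using commuting_rank_one_idempotents_eq[OF _ _ E(2) _ _ F(2)] carrier rank E(1) F(1)
    by blast
qed

lemma regular_mat_semigroup_unique_idempotent_group:
  assumes S: "mat_semigroup n S" and regular: "\<forall>A\<in>S. \<exists>X\<in>S. A * X * A = A"
    and unique: "\<forall>E\<in>S. \<forall>F\<in>S. E * E = E \<longrightarrow> F * F = F \<longrightarrow> E = F"
  shows "mat_group S"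
proof -
  have carrier: "\<And>A. A \<in> S \<Longrightarrow> A \<in> carrier_mat n n"
    and mult: "\<And>A B. A \<in> S \<Longrightarrow> B \<in> S \<Longrightarrow> A * B \<in> S"
    using S by (auto simp: mat_semigroup_def)
  have assoc: "A * B * C = A * (B * C)" if "A \<in> S" "B \<in> S" "C \<in> S" for A B C
    using assoc_mult_mat[OF carrier carrier carrier] that .
  have inner: "A * X * (A * X) = A * X" "X * A * (X * A) = X * A"
    if "A \<in> S" "X \<in> S" "A * X * A = A" for A X
  proof -
    have "A * X * (A * X) = A * X * A * X" and "X * A * (X * A) = X * (A * X * A)"
      using that(1,2) by (simp_all add: assoc mult)
    then show "A * X * (A * X) = A * X" "X * A * (X * A) = X * A"
      using that(3) by simp_all
  qed
  obtain A0 where A0: "A0 \<in> S"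
    using S by (auto simp: mat_semigroup_def)
  then obtain X0 where X0: "X0 \<in> S" "A0 * X0 * A0 = A0"
    using regular by blast
  define E where "E = A0 * X0"
  have E: "E \<in> S" "E * E = E"
    unfolding E_def using mult[OF A0 X0(1)] inner(1)[OF A0 X0] by simp_all
  have "E * A = A \<and> A * E = A \<and> (\<exists>B\<in>S. A * B = E \<and> B * A = E)" if A: "A \<in> S" for A
  proof -
    obtain X where X: "X \<in> S" and AXA: "A * X * A = A"
      using regular A by blast
    have AX: "A * X = E" and XA: "X * A = E"
      using unique[rule_format, OF mult[OF A X] E(1) inner(1)[OF A X AXA] E(2)]
        unique[rule_format, OF mult[OF X A] E(1) inner(2)[OF A X AXA] E(2)] .
    have "A * (X * A * X) = A * X * A * X"
      using A X by (simp add: assoc mult)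
    also have "\<dots> = E"
      using AXA AX by simp
    finally have "A * (X * A * X) = E" .
    moreover have "X * A * X * A = X * (A * X * A)"
      using A X by (simp add: assoc mult)
    then have "X * A * X * A = E"
      using AXA XA by simp
    moreover have "E * A = A" "A * E = A"
      using AXA assoc[OF A X A] AX XA by simp_all
    moreover have "X * A * X \<in> S"
      using A X mult by simp
    ultimately show ?thesis
      by blast
  qed
  then show ?thesis
    unfolding mat_group_def using mult E(1) by blast
qed

lemma rank_one_mat_group_commutative:
  fixes S :: "'a::field mat set"
  assumes S: "S \<subseteq> carrier_mat n n" and group: "mat_group S" and rank: "\<forall>A\<in>S. vec_space.rank n A = 1"
    and A: "A \<in> S" and B: "B \<in> S"
  shows "A * B = B * A"
proof -
  obtain E where E: "E \<in> S" and unit: "\<And>A. A \<in> S \<Longrightarrow> E * A = A \<and> A * E = A"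
    using group by (auto simp: mat_group_def)
  have E_carrier: "E \<in> carrier_mat n n" and idem: "E * E = E"
    using S E unit by auto
  have scalar: "\<exists>c. M = c \<cdot>\<^sub>m E" if M: "M \<in> S" for M
  proof -
    obtain c where "E * M * E = c \<cdot>\<^sub>m E"
      using rank_one_mat_sandwich[OF E_carrier] rank E M S by blast
    then show ?thesis
      using unit[OF M] by auto
  qed
  obtain a b where "A = a \<cdot>\<^sub>m E" "B = b \<cdot>\<^sub>m E"
    using scalar A B by blast
  then show ?thesis
    using smult_mult_smult_idempotent[OF E_carrier idem] by (simp add: mult.commute)
qed

theorem corollary2p4:
  fixes S :: "'a::field mat set" and n :: nat
  assumes "n > 0"
    and "clifford_mat_semigroup n S"
    and "\<forall>A\<in>S. vec_space.rank n A = 1"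
  shows "mat_group S \<and> (\<forall>A\<in>S. \<forall>B\<in>S. A * B = B * A) \<and> (\<forall>A\<in>S. eigenvalues_in_field A)"
proof -
  have semigroup: "mat_semigroup n S" and regular: "\<forall>A\<in>S. \<exists>X\<in>S. A * X * A = A"
    and central: "\<forall>E\<in>S. E * E = E \<longrightarrow> (\<forall>A\<in>S. E * A = A * E)"
    using assms(2) by (auto simp: clifford_mat_semigroup_def)
  have carrier: "S \<subseteq> carrier_mat n n"
    using semigroup by (simp add: mat_semigroup_def)
  have "\<forall>E\<in>S. \<forall>F\<in>S. E * E = E \<longrightarrow> F * F = F \<longrightarrow> E = F"
    by (rule rank_one_central_idempotents_eq[OF semigroup central assms(3)])
  then have group: "mat_group S"
    by (rule regular_mat_semigroup_unique_idempotent_group[OF semigroup regular])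
  have "eigenvalues_in_field A" if A: "A \<in> S" for A
  proof -
    obtain u v where "u \<in> carrier_vec n" "v \<in> carrier_vec n" "A = outer_mat n u v"
      using rank_one_mat_eq_outer_mat carrier assms(3) A by blast
    then show ?thesis
      using eigenvalues_in_field_outer_mat by blast
  qed
  then show ?thesis
    using group rank_one_mat_group_commutative[OF carrier group assms(3)] by blast
qed

end
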